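(* Let $b=(b_1,\dots,b_d)\in(0,\infty)^d$. For each $j\in\{1,\dots,d\}$ let $\Lambda_j = \{\pm\lambda_j(k) : k\in\mathbb{N}_0\}\subseteq\mathbb{R}$, where $\lambda_j:\mathbb{N}_0\to(0,\infty)$ is increasing, and let $\Lambda = \Lambda_1\times\cdots\times\Lambda_d$. If $$\liminf_{k\to\infty}\frac{\lambda_j(k)}{\sqrt{k}} < \frac{1}{\sqrt{b_j e}}$$ for every $j\in\{1,\dots,d\}$, then $\Lambda$ is a uniqueness set for $\mathcal{O}^b(\mathbb{C}^d)$. If, on the other hand, $$\liminf_{k\to\infty}\frac{\lambda_j(k)}{\sqrt{k}} > \sqrt{\frac{\pi}{b_j}}$$ for some $j\in\{1,\dots,d\}$, then $\Lambda$ is not a uniqueness set for $\mathcal{O}^b(\mathbb{C}^d)$.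
   Context: For $b\in(0,\infty)^d$, $\mathcal{O}^b(\mathbb{C}^d)$ is the set of entire functions $F$ on $\mathbb{C}^d$ for which there is $C>0$ with $|F(z_1,\dots,z_d)|\le C\prod_{j=1}^d e^{b_j|z_j|^2}$ for all $z\in\mathbb{C}^d$. A set $\Lambda\subseteq\mathbb{C}^d$ is a uniqueness set for a linear space $\mathcal{S}$ of entire functions if every $F\in\mathcal{S}$ vanishing on $\Lambda$ is identically zero. *)

theory Defs
  imports "HOL-Analysis.Analysis" "HOL-Library.Extended_Real"
begin

text \<open>Points of C^d are modelled as vectors complex ^ 'n, where 'n is a finite
index type with CARD('n) = d.\<close>

definition complex_linear_cd :: "(complex ^ 'n \<Rightarrow> complex) \<Rightarrow> bool" where
  "complex_linear_cd L \<longleftrightarrow>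
     (\<forall>u v. L (u + v) = L u + L v) \<and> (\<forall>c v. L (c *s v) = c * L v)"

definition entire_cd :: "(complex ^ 'n \<Rightarrow> complex) \<Rightarrow> bool" where
  "entire_cd F \<longleftrightarrow>
     (\<forall>z. \<exists>L. (F has_derivative L) (at z) \<and> complex_linear_cd L)"

definition Ob :: "real ^ 'n \<Rightarrow> (complex ^ 'n \<Rightarrow> complex) set" where
  "Ob b = {F. entire_cd F \<and>
     (\<exists>C>0. \<forall>z. norm (F z) \<le> C * (\<Prod>j\<in>UNIV. exp (b $ j * norm (z $ j) ^ 2)))}"

definition uniqueness_set :: "'a set \<Rightarrow> ('a \<Rightarrow> complex) set \<Rightarrow> bool" where
  "uniqueness_set \<Lambda> S \<longleftrightarrow>
     (\<forall>F\<in>S. (\<forall>z\<in>\<Lambda>. F z = 0) \<longrightarrow> (\<forall>z. F z = 0))"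

definition sym_seq_set :: "(nat \<Rightarrow> real) \<Rightarrow> real set" where
  "sym_seq_set l = {x. \<exists>k. x = l k \<or> x = - l k}"

definition product_lattice :: "('n \<Rightarrow> nat \<Rightarrow> real) \<Rightarrow> (complex ^ 'n) set" where
  "product_lattice lam = {z. \<forall>j. z $ j \<in> complex_of_real ` sym_seq_set (lam j)}"

end

theory Submission
  imports Defs "HOL-Complex_Analysis.Complex_Analysis"
begin

text \<open>Both statements reduce to one variable. Restricting to coordinate slices shows that a
  product of uniqueness sets for the one-variable spaces O^(b_j)(C) is a uniqueness set for
  O^b(C^d), and composing with a coordinate projection shows that a single factor which is not a
  uniqueness set spoils the product.

  In one variable, let g in O^b(C) vanish at the points \<plusminus>lam k. If lam n^2 < \<kappa> n for
  infinitely many n, where b \<kappa> e < 1, Jensen's inequality on the circles of radius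
  sqrt (\<kappa> e n) forces g, after dividing out its zero at 0, to vanish at 0. If instead
  lam k^2 \<ge> \<kappa> k eventually, where pi / \<kappa> < b, the Weierstrass product of 1 - z^4 / lam k^4
  vanishes on \<Lambda>_j, and comparison with the product formula for sinh bounds its growth by
  exp ((pi / \<kappa> + \<epsilon>) |z|^2) for every \<epsilon> > 0.\<close>

definition Ob1 :: "real \<Rightarrow> (complex \<Rightarrow> complex) set" where
  "Ob1 b = {g. g holomorphic_on UNIV \<and> (\<exists>C>0. \<forall>z. norm (g z) \<le> C * exp (b * norm z ^ 2))}"

section \<open>Reduction to one variable\<close>

lemma entire_cd_slice_holomorphic:
  fixes F :: "complex ^ 'n \<Rightarrow> complex"
  assumes "entire_cd F"
  shows "(\<lambda>t. F (\<chi> i. if i = j then t else w $ i)) holomorphic_on UNIV"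
proof -
  define e :: "complex ^ 'n" where "e = (\<chi> i. if i = j then 1 else 0)"
  define w' :: "complex ^ 'n" where "w' = (\<chi> i. if i = j then 0 else w $ i)"
  have slice: "(\<chi> i. if i = j then t else w $ i) = w' + t *s e" for t
    by (auto simp: vec_eq_iff e_def w'_def)
  have "linear (\<lambda>t::complex. t *s e)"
    by (rule linearI) (simp_all add: vec_eq_iff algebra_simps)
  then have line: "((\<lambda>t. w' + t *s e) has_derivative (\<lambda>t. t *s e)) (at t)" for t
    using has_derivative_add[OF has_derivative_const bounded_linear_imp_has_derivative]
    by (simp add: linear_conv_bounded_linear)
  show ?thesis
    unfolding holomorphic_on_def slice
  proof
    fix t :: complex
    obtain L where L: "(F has_derivative L) (at (w' + t *s e))" "complex_linear_cd L"
      using assms unfolding entire_cd_def by blast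
    have "((F \<circ> (\<lambda>t. w' + t *s e)) has_derivative L \<circ> (\<lambda>t. t *s e)) (at t)"
      by (rule diff_chain_at[OF line L(1)])
    moreover have "L \<circ> (\<lambda>t. t *s e) = (\<lambda>t. L e * t)"
      using L(2) by (auto simp: complex_linear_cd_def fun_eq_iff mult.commute)
    ultimately have "((\<lambda>t. F (w' + t *s e)) has_field_derivative L e) (at t)"
      by (simp add: has_field_derivative_def o_def)
    then show "(\<lambda>t. F (w' + t *s e)) field_differentiable at t within UNIV"
      by (auto simp: field_differentiable_def)
  qed
qed

lemma entire_cd_coordinate:
  fixes G :: "complex \<Rightarrow> complex"
  assumes "G holomorphic_on UNIV"
  shows "entire_cd (\<lambda>z :: complex ^ 'n. G (z $ j))"
  unfolding entire_cd_def
proof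
  fix z :: "complex ^ 'n"
  have "(G has_field_derivative deriv G (z $ j)) (at (z $ j))"
    using assms by (auto intro: holomorphic_derivI)
  then have "((G \<circ> (\<lambda>z. z $ j)) has_derivative (\<lambda>h. deriv G (z $ j) * h) \<circ> (\<lambda>h. h $ j)) (at z)"
    unfolding has_field_derivative_def
    by (rule diff_chain_at[OF bounded_linear_imp_has_derivative[OF bounded_linear_vec_nth]])
  moreover have "complex_linear_cd ((\<lambda>h. deriv G (z $ j) * h) \<circ> (\<lambda>h. h $ j))"
    by (simp add: complex_linear_cd_def algebra_simps)
  ultimately show "\<exists>L. ((\<lambda>z. G (z $ j)) has_derivative L) (at z) \<and> complex_linear_cd L"
    by (auto simp: o_def)
qed

lemma Ob_slice_in_Ob1:
  fixes F :: "complex ^ 'n \<Rightarrow> complex"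
  assumes "F \<in> Ob b"
  shows "(\<lambda>t. F (\<chi> i. if i = j then t else w $ i)) \<in> Ob1 (b $ j)"
proof -
  obtain C where "C > 0" and "entire_cd F"
    and bound: "\<And>z. norm (F z) \<le> C * (\<Prod>i\<in>UNIV. exp (b $ i * (norm (z $ i))\<^sup>2))"
    using assms unfolding Ob_def by blast
  define K where "K = (\<Prod>i\<in>UNIV - {j}. exp (b $ i * (norm (w $ i))\<^sup>2))"
  have "K > 0" unfolding K_def by (intro prod_pos) auto
  have "norm (F (\<chi> i. if i = j then t else w $ i)) \<le> (C * K) * exp (b $ j * (norm t)\<^sup>2)" for t
  proof -
    define z :: "complex ^ 'n" where "z = (\<chi> i. if i = j then t else w $ i)"
    have "(\<Prod>i\<in>UNIV. exp (b $ i * (norm (z $ i))\<^sup>2))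
        = exp (b $ j * (norm (z $ j))\<^sup>2) * (\<Prod>i\<in>UNIV - {j}. exp (b $ i * (norm (z $ i))\<^sup>2))"
      by (rule prod.remove) auto
    also have "\<dots> = exp (b $ j * (norm t)\<^sup>2) * K"
      unfolding K_def by (intro arg_cong2[where f = "(*)"] prod.cong) (auto simp: z_def)
    finally show ?thesis using bound[of z] by (simp add: z_def mult_ac)
  qed
  then show ?thesis
    using entire_cd_slice_holomorphic[OF \<open>entire_cd F\<close>] \<open>C > 0\<close> \<open>K > 0\<close>
    by (auto simp: Ob1_def intro!: exI[of _ "C * K"])
qed

lemma Ob1_coordinate_in_Ob:
  fixes b :: "real ^ 'n"
  assumes "G \<in> Ob1 (b $ j)" and b_nonneg: "\<And>i. b $ i \<ge> 0"
  shows "(\<lambda>z. G (z $ j)) \<in> Ob b"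
proof -
  obtain C where "C > 0" "G holomorphic_on UNIV"
    and bound: "\<And>t. norm (G t) \<le> C * exp (b $ j * (norm t)\<^sup>2)"
    using assms(1) unfolding Ob1_def by blast
  have "norm (G (z $ j)) \<le> C * (\<Prod>i\<in>UNIV. exp (b $ i * (norm (z $ i))\<^sup>2))" for z :: "complex ^ 'n"
  proof -
    have "1 \<le> (\<Prod>i\<in>UNIV - {j}. exp (b $ i * (norm (z $ i))\<^sup>2))"
      using b_nonneg by (intro prod_ge_1) simp
    then have "exp (b $ j * (norm (z $ j))\<^sup>2) \<le> (\<Prod>i\<in>UNIV. exp (b $ i * (norm (z $ i))\<^sup>2))"
      by (simp add: prod.remove[of UNIV j])
    then show ?thesis using bound[of "z $ j"] \<open>C > 0\<close> by (meson mult_left_mono less_imp_le order_trans)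
  qed
  then show ?thesis
    using entire_cd_coordinate[OF \<open>G holomorphic_on UNIV\<close>] \<open>C > 0\<close> by (auto simp: Ob_def)
qed

text \<open>Induction on the set S of unconstrained coordinates: if F vanishes whenever the coordinates
  outside S lie in their factor sets, its slice in a further coordinate j vanishes on L j, hence
  identically.\<close>
lemma uniqueness_set_product:
  fixes b :: "real ^ 'n" and L :: "'n \<Rightarrow> complex set"
  assumes "\<And>j. uniqueness_set (L j) (Ob1 (b $ j))"
  shows "uniqueness_set {z. \<forall>j. z $ j \<in> L j} (Ob b)"
  unfolding uniqueness_set_def
proof (intro ballI impI)
  fix F assume F: "F \<in> Ob b" and zeros: "\<forall>z\<in>{z. \<forall>j. z $ j \<in> L j}. F z = 0"
  have free: "\<forall>z. (\<forall>i. i \<notin> S \<longrightarrow> z $ i \<in> L i) \<longrightarrow> F z = 0" if "finite S" for S :: "'n set"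
    using that
  proof (induction S rule: finite_induct)
    case empty
    then show ?case using zeros by auto
  next
    case (insert j S)
    show ?case
    proof (intro allI impI)
      fix z :: "complex ^ 'n" assume z: "\<forall>i. i \<notin> insert j S \<longrightarrow> z $ i \<in> L i"
      define g where "g = (\<lambda>t. F (\<chi> i. if i = j then t else z $ i))"
      have "g t = 0" if t: "t \<in> L j" for t
      proof -
        have "\<forall>i. i \<notin> S \<longrightarrow> (\<chi> i. if i = j then t else z $ i) $ i \<in> L i" using z t by auto
        then show ?thesis using insert.IH unfolding g_def by blast
      qed
      moreover have "g \<in> Ob1 (b $ j)" unfolding g_def by (rule Ob_slice_in_Ob1[OF F])
      ultimately have "g (z $ j) = 0" using assms[of j] unfolding uniqueness_set_def by blast
      moreover have "(\<chi> i. if i = j then z $ j else z $ i) = z" by (simp add: vec_eq_iff)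
      ultimately show "F z = 0" by (simp add: g_def)
    qed
  qed
  show "\<forall>z. F z = 0" using free[of UNIV] by simp
qed

lemma not_uniqueness_set_product:
  fixes b :: "real ^ 'n" and L :: "'n \<Rightarrow> complex set"
  assumes "\<not> uniqueness_set (L j) (Ob1 (b $ j))" and "\<And>i. b $ i \<ge> 0"
  shows "\<not> uniqueness_set {z. \<forall>j. z $ j \<in> L j} (Ob b)"
proof -
  obtain G w where G: "G \<in> Ob1 (b $ j)" and zeros: "\<forall>t\<in>L j. G t = 0" and "G w \<noteq> 0"
    using assms(1) unfolding uniqueness_set_def by blast
  have Ob: "(\<lambda>z. G (z $ j)) \<in> Ob b" by (rule Ob1_coordinate_in_Ob[OF G assms(2)])
  have vanish: "\<forall>z\<in>{z. \<forall>j. z $ j \<in> L j}. G (z $ j) = 0" using zeros by simp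
  show ?thesis
  proof
    assume "uniqueness_set {z. \<forall>j. z $ j \<in> L j} (Ob b)"
    then have "\<forall>F\<in>Ob b. (\<forall>z\<in>{z. \<forall>j. z $ j \<in> L j}. F z = 0) \<longrightarrow> (\<forall>z. F z = 0)"
      by (simp only: uniqueness_set_def)
    from bspec[OF this Ob] vanish have "\<forall>z. G (z $ j) = 0" by (rule mp)
    then have "G ((\<chi> i. w) $ j) = 0" by (rule spec)
    with \<open>G w \<noteq> 0\<close> show False by simp
  qed
qed

section \<open>Uniqueness via Jensen's inequality\<close>

lemma entire_divide_out_zeros:
  fixes f :: "complex \<Rightarrow> complex"
  assumes holf: "f holomorphic_on UNIV" and "finite A" and "\<And>a. a \<in> A \<Longrightarrow> f a = 0"
  obtains q where "q holomorphic_on UNIV" "\<And>z. f z = q z * (\<Prod>a\<in>A. z - a)"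
proof -
  have "\<exists>q. q holomorphic_on UNIV \<and> (\<forall>z. f z = q z * (\<Prod>a\<in>A. z - a))"
    using assms(2,3)
  proof (induction A rule: finite_induct)
    case empty
    then show ?case using holf by auto
  next
    case (insert a A)
    then obtain q where holq: "q holomorphic_on UNIV" and fq: "\<And>z. f z = q z * (\<Prod>a\<in>A. z - a)"
      by auto
    have "(\<Prod>x\<in>A. a - x) \<noteq> 0" using insert.hyps by simp
    with fq[of a] insert.prems have qa: "q a = 0" by simp
    define q' where "q' z = (if z = a then deriv q a else (q z - q a) / (z - a))" for z
    have "q' holomorphic_on UNIV"
      unfolding q'_def by (rule pole_lemma_open[OF holq]) simp
    moreover have "f z = q' z * (\<Prod>x\<in>insert a A. z - x)" for z
      using fq[of z] qa insert.hyps by (simp add: q'_def mult.assoc)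
    ultimately show ?case by blast
  qed
  then show ?thesis using that by blast
qed

lemma entire_factor_zero_at_0:
  fixes f :: "complex \<Rightarrow> complex"
  assumes holf: "f holomorphic_on UNIV" and "f w \<noteq> 0"
  obtains h m where "h holomorphic_on UNIV" "h 0 \<noteq> 0" "\<And>z. f z = z ^ m * h z"
proof -
  define m where "m = nat (zorder f 0)"
  have "\<exists>r>0. zor_poly f 0 holomorphic_on cball 0 r \<and>
      (\<forall>z\<in>cball 0 r. f z = zor_poly f 0 z * z ^ m \<and> zor_poly f 0 z \<noteq> 0)"
    using zorder_exist_zero[of f UNIV 0] holf assms(2) unfolding m_def by auto
  then obtain r where r: "r > 0" and holg: "zor_poly f 0 holomorphic_on cball 0 r"
    and fg: "\<And>z. z \<in> cball 0 r \<Longrightarrow> f z = zor_poly f 0 z * z ^ m \<and> zor_poly f 0 z \<noteq> 0"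
    by blast
  define h where "h z = (if z \<in> ball 0 r then zor_poly f 0 z else f z / z ^ m)" for z
  have "h holomorphic_on ball 0 r"
    by (rule holomorphic_transform[OF holomorphic_on_subset[OF holg]]) (auto simp: h_def)
  moreover have "h holomorphic_on - {0}"
  proof (rule holomorphic_transform)
    show "(\<lambda>z. f z / z ^ m) holomorphic_on - {0}"
      by (intro holomorphic_intros holomorphic_on_subset[OF holf]) auto
    show "f z / z ^ m = h z" if "z \<in> - {0}" for z
      using that fg[of z] by (auto simp: h_def)
  qed
  ultimately have "h holomorphic_on ball 0 r \<union> - {0}"
    by (rule holomorphic_on_Un) auto
  moreover have "ball 0 r \<union> - {0} = UNIV" using r by auto
  ultimately have "h holomorphic_on UNIV" by metis
  moreover have "h 0 \<noteq> 0" using r fg[of 0] by (simp add: h_def)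
  moreover have "f z = z ^ m * h z" for z
    using fg[of z] r by (cases "z = 0") (auto simp: h_def mult.commute)
  ultimately show ?thesis using that by blast
qed

lemma norm_blaschke_numerator:
  fixes z a :: complex
  assumes "norm z = R"
  shows "norm ((complex_of_real R)\<^sup>2 - cnj a * z) = R * norm (z - a)"
proof -
  have "(complex_of_real R)\<^sup>2 - cnj a * z = z * cnj (z - a)"
    using assms complex_norm_square[of z] by (simp add: algebra_simps)
  then show ?thesis using assms by (simp only: norm_mult complex_mod_cnj)
qed

text \<open>Dividing out the zeros and multiplying by the Blaschke numerators R^2 - cnj a z, which have
  modulus R |z - a| on the circle, reduces this to the maximum principle (Cauchy's inequality of
  order 0).\<close>
lemma jensen_bound_finite_zeros:
  fixes h :: "complex \<Rightarrow> complex"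
  assumes holh: "h holomorphic_on UNIV" and fin: "finite A" and "0 \<notin> A"
    and zeros: "\<And>a. a \<in> A \<Longrightarrow> h a = 0"
    and R: "R > 0" and bound: "\<And>z. norm z = R \<Longrightarrow> norm (h z) \<le> B"
  shows "norm (h 0) * (\<Prod>a\<in>A. R / norm a) \<le> B"
proof -
  obtain q where holq: "q holomorphic_on UNIV" and hq: "\<And>z. h z = q z * (\<Prod>a\<in>A. z - a)"
    using entire_divide_out_zeros[OF holh fin zeros] by blast
  define Q where "Q z = q z * (\<Prod>a\<in>A. (complex_of_real R)\<^sup>2 - cnj a * z)" for z
  have holQ: "Q holomorphic_on UNIV" unfolding Q_def by (intro holomorphic_intros holq)
  have "norm ((deriv ^^ 0) Q 0) \<le> fact 0 * (R ^ card A * B) / R ^ 0"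
  proof (rule Cauchy_inequality)
    show "Q holomorphic_on ball 0 R" "continuous_on (cball 0 R) Q"
      using holQ holomorphic_on_subset holomorphic_on_imp_continuous_on by blast+
    fix z :: complex assume "norm (0 - z) = R"
    then have z: "norm z = R" by simp
    have "(\<Prod>a\<in>A. norm ((complex_of_real R)\<^sup>2 - cnj a * z)) = (\<Prod>a\<in>A. R * norm (z - a))"
      by (rule prod.cong) (simp_all add: norm_blaschke_numerator[OF z])
    then have "norm (Q z) = R ^ card A * norm (h z)"
      by (simp add: Q_def hq norm_mult prod_norm[symmetric] prod.distrib)
    also have "\<dots> \<le> R ^ card A * B" using bound[OF z] R by (simp add: mult_left_mono)
    finally show "norm (Q z) \<le> R ^ card A * B" .
  qed (use R in simp)
  moreover have "norm (Q 0) = norm (q 0) * (R ^ card A * R ^ card A)"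
    by (simp add: Q_def norm_mult prod_norm[symmetric] norm_power abs_of_pos[OF R]
        power2_eq_square power_mult_distrib)
  ultimately have "R ^ card A * (norm (q 0) * R ^ card A) \<le> R ^ card A * B"
    by (simp add: mult_ac)
  then have "norm (q 0) * R ^ card A \<le> B" using R by simp
  moreover have "(\<Prod>a\<in>A. norm a) * (\<Prod>a\<in>A. R / norm a) = R ^ card A"
  proof -
    have "(\<Prod>a\<in>A. norm a) * (\<Prod>a\<in>A. R / norm a) = (\<Prod>a\<in>A. norm a * (R / norm a))"
      by (simp only: prod.distrib)
    also have "\<dots> = (\<Prod>a\<in>A. R)"
      using \<open>0 \<notin> A\<close> by (intro prod.cong) auto
    finally show ?thesis by simp
  qed
  ultimately show ?thesis
    by (simp add: hq norm_mult prod_norm[symmetric] mult.assoc)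
qed

lemma jensen_bound_zeros_in_cball:
  fixes h :: "complex \<Rightarrow> complex"
  assumes "h holomorphic_on UNIV" "finite A" "0 \<notin> A" "\<And>a. a \<in> A \<Longrightarrow> h a = 0"
    and small: "\<And>a. a \<in> A \<Longrightarrow> norm a \<le> r"
    and "R > 0" "\<And>z. norm z = R \<Longrightarrow> norm (h z) \<le> B"
  shows "norm (h 0) * (R / r) ^ card A \<le> B"
proof -
  have "(R / r) ^ card A \<le> (\<Prod>a\<in>A. R / norm a)"
  proof -
    have "0 \<le> R / r \<and> R / r \<le> R / norm a" if "a \<in> A" for a
    proof -
      have "0 < norm a" "norm a \<le> r" using small[OF that] \<open>0 \<notin> A\<close> that by auto
      then have "0 < r" by linarith
      then have "0 \<le> R / r" using \<open>R > 0\<close> by simp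
      moreover have "R / r \<le> R / norm a"
        using \<open>0 < norm a\<close> \<open>norm a \<le> r\<close> \<open>R > 0\<close> by (intro frac_le) auto
      ultimately show ?thesis by blast
    qed
    then show ?thesis using prod_mono[of A "\<lambda>_. R / r" "\<lambda>a. R / norm a"] by simp
  qed
  then have "norm (h 0) * (R / r) ^ card A \<le> norm (h 0) * (\<Prod>a\<in>A. R / norm a)"
    by (simp add: mult_left_mono)
  also have "\<dots> \<le> B" using jensen_bound_finite_zeros assms by blast
  finally show ?thesis .
qed

lemma jensen_bound_sym_seq_zeros:
  fixes h :: "complex \<Rightarrow> complex" and lam :: "nat \<Rightarrow> real"
  assumes holh: "h holomorphic_on UNIV"
    and lam_pos: "\<And>k. lam k > 0" and lam_incr: "strict_mono lam"
    and zeros: "\<And>x. x \<in> sym_seq_set lam \<Longrightarrow> h (complex_of_real x) = 0"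
    and R: "R > 0" and bound: "\<And>z. norm z = R \<Longrightarrow> norm (h z) \<le> B"
  shows "norm (h 0) * (R / lam n) ^ (2 * Suc n) \<le> B"
proof -
  define P where "P = (\<lambda>k. complex_of_real (lam k)) ` {..n}"
  define A where "A = P \<union> uminus ` P"
  have "inj_on (\<lambda>k. complex_of_real (lam k)) {..n}"
    using strict_mono_imp_inj_on[OF lam_incr] by (auto simp: inj_on_def)
  then have "card P = Suc n" by (simp add: P_def card_image)
  moreover have "card (uminus ` P) = card P" by (rule card_image) (simp add: inj_on_def)
  moreover have "P \<inter> uminus ` P = {}"
    using lam_pos by (auto simp: P_def) (metis add.inverse_inverse less_asym neg_0_less_iff_less)
  ultimately have "card A = 2 * Suc n" by (simp add: A_def card_Un_disjoint P_def)
  moreover have "h a = 0" if a: "a \<in> A" for a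
  proof -
    obtain k where "a = complex_of_real (lam k) \<or> a = complex_of_real (- lam k)"
      using a by (auto simp: A_def P_def)
    moreover have "lam k \<in> sym_seq_set lam" "- lam k \<in> sym_seq_set lam"
      by (auto simp: sym_seq_set_def)
    ultimately show ?thesis using zeros by blast
  qed
  moreover have "0 \<notin> A" using lam_pos by (auto simp: A_def P_def) (metis less_irrefl)+
  moreover have "norm a \<le> lam n" if "a \<in> A" for a
    using that lam_pos strict_mono_less_eq[OF lam_incr]
    by (auto simp: A_def P_def abs_of_pos less_imp_le)
  ultimately show ?thesis
    using jensen_bound_zeros_in_cball[OF holh, of A "lam n" R B] R bound
    by (simp add: A_def P_def)
qed

text \<open>The radius R = sqrt (\<kappa> e n) makes each of the 2(n + 1) Jensen factors R / |a| at least
  sqrt e, while the growth bound on the circle is only C e^(b \<kappa> e n).\<close>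
lemma norm_at_0_le_sym_seq_zeros:
  fixes h :: "complex \<Rightarrow> complex" and lam :: "nat \<Rightarrow> real"
  assumes holh: "h holomorphic_on UNIV"
    and lam_pos: "\<And>k. lam k > 0" and lam_incr: "strict_mono lam"
    and zeros: "\<And>x. x \<in> sym_seq_set lam \<Longrightarrow> h (complex_of_real x) = 0"
    and growth: "\<And>z. 1 \<le> norm z \<Longrightarrow> norm (h z) \<le> C * exp (b * (norm z)\<^sup>2)"
    and "\<kappa> > 0" and n: "(lam n)\<^sup>2 < \<kappa> * real n" "1 \<le> \<kappa> * exp 1 * real n"
  shows "norm (h 0) * exp 1 ^ Suc n \<le> C * exp (b * \<kappa> * exp 1 * real n)"
proof -
  define R where "R = sqrt (\<kappa> * exp 1 * real n)"
  have R2: "R\<^sup>2 = \<kappa> * exp 1 * real n" using \<open>\<kappa> > 0\<close> by (simp add: R_def)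
  have "1 \<le> R" using n(2) by (simp add: R_def)
  then have "norm (h 0) * (R / lam n) ^ (2 * Suc n) \<le> C * exp (b * R\<^sup>2)"
    using growth by (intro jensen_bound_sym_seq_zeros[OF holh lam_pos lam_incr zeros]) auto
  moreover have "exp 1 \<le> (R / lam n)\<^sup>2"
    using n(1) lam_pos[of n] \<open>\<kappa> > 0\<close> by (simp add: R2 field_simps)
  then have "exp 1 ^ Suc n \<le> ((R / lam n)\<^sup>2) ^ Suc n" by (rule power_mono) simp
  then have "exp 1 ^ Suc n \<le> (R / lam n) ^ (2 * Suc n)" by (simp only: power_mult)
  ultimately have "norm (h 0) * exp 1 ^ Suc n \<le> C * exp (b * R\<^sup>2)"
    by (meson mult_left_mono norm_ge_zero order_trans)
  then show ?thesis by (simp add: R2 mult.assoc)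
qed

lemma sym_seq_zeros_imp_zero_at_0:
  fixes h :: "complex \<Rightarrow> complex" and lam :: "nat \<Rightarrow> real" and b \<kappa> :: real
  assumes holh: "h holomorphic_on UNIV"
    and lam_pos: "\<And>k. lam k > 0" and lam_incr: "strict_mono lam"
    and zeros: "\<And>x. x \<in> sym_seq_set lam \<Longrightarrow> h (complex_of_real x) = 0"
    and growth: "\<And>z. 1 \<le> norm z \<Longrightarrow> norm (h z) \<le> C * exp (b * (norm z)\<^sup>2)"
    and \<kappa>: "\<kappa> > 0" "b * \<kappa> * exp 1 < 1"
    and sparse: "\<exists>\<^sub>F k in sequentially. (lam k)\<^sup>2 < \<kappa> * real k"
  shows "h 0 = 0"
proof (rule ccontr)
  assume "h 0 \<noteq> 0"
  have est: "norm (h 0) * exp 1 \<le> C * exp (b * \<kappa> * exp 1 - 1) ^ n"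
    if "(lam n)\<^sup>2 < \<kappa> * real n" "1 \<le> \<kappa> * exp 1 * real n" for n
  proof -
    have "norm (h 0) * exp 1 * exp 1 ^ n \<le> C * exp (b * \<kappa> * exp 1 * real n)"
      using norm_at_0_le_sym_seq_zeros[OF holh lam_pos lam_incr zeros growth \<kappa>(1) that]
      by (simp add: mult.assoc)
    also have "\<dots> = C * exp (b * \<kappa> * exp 1 - 1) ^ n * exp 1 ^ n"
      by (simp add: algebra_simps flip: exp_of_nat_mult power_mult_distrib exp_add)
    finally show ?thesis by simp
  qed
  have "filterlim (\<lambda>n. \<kappa> * exp 1 * real n) at_top sequentially"
    using \<kappa>(1)
    by (intro filterlim_tendsto_pos_mult_at_top[OF tendsto_const] filterlim_real_sequentially) simp
  then have large: "\<forall>\<^sub>F n in sequentially. 1 \<le> \<kappa> * exp 1 * real n"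
    by (simp add: filterlim_at_top)
  have "(\<lambda>n. C * exp (b * \<kappa> * exp 1 - 1) ^ n) \<longlonglongrightarrow> C * 0"
    using \<kappa>(2) by (intro tendsto_mult tendsto_const LIMSEQ_power_zero) simp
  then have small: "\<forall>\<^sub>F n in sequentially. C * exp (b * \<kappa> * exp 1 - 1) ^ n < norm (h 0) * exp 1"
    using \<open>h 0 \<noteq> 0\<close> by (intro order_tendstoD(2)) auto
  obtain n where "(lam n)\<^sup>2 < \<kappa> * real n" "1 \<le> \<kappa> * exp 1 * real n"
    and "C * exp (b * \<kappa> * exp 1 - 1) ^ n < norm (h 0) * exp 1"
    using frequently_ex[OF frequently_eventually_conj[OF sparse eventually_conj[OF large small]]]
    by blast
  with est show False by fastforce
qed

lemma uniqueness_set_sym_seq_Ob1: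
  fixes lam :: "nat \<Rightarrow> real" and b \<kappa> :: real
  assumes lam_pos: "\<And>k. lam k > 0" and lam_incr: "strict_mono lam"
    and \<kappa>: "\<kappa> > 0" "b * \<kappa> * exp 1 < 1"
    and sparse: "\<exists>\<^sub>F k in sequentially. (lam k)\<^sup>2 < \<kappa> * real k"
  shows "uniqueness_set (complex_of_real ` sym_seq_set lam) (Ob1 b)"
  unfolding uniqueness_set_def
proof (intro ballI impI allI)
  fix g w assume "g \<in> Ob1 b" and zeros: "\<forall>z\<in>complex_of_real ` sym_seq_set lam. g z = 0"
  then obtain C where holg: "g holomorphic_on UNIV"
    and bound: "\<And>z. norm (g z) \<le> C * exp (b * (norm z)\<^sup>2)"
    by (auto simp: Ob1_def)
  show "g w = 0"
  proof (rule ccontr)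
    assume "g w \<noteq> 0"
    then obtain h m where holh: "h holomorphic_on UNIV" and "h 0 \<noteq> 0"
      and gh: "\<And>z. g z = z ^ m * h z"
      using entire_factor_zero_at_0[OF holg] by blast
    have "h (complex_of_real x) = 0" if "x \<in> sym_seq_set lam" for x
    proof -
      have "x \<noteq> 0" using that lam_pos by (auto simp: sym_seq_set_def) (metis less_irrefl)+
      then show ?thesis using zeros that gh[of "complex_of_real x"] by auto
    qed
    moreover have "norm (h z) \<le> C * exp (b * (norm z)\<^sup>2)" if "1 \<le> norm z" for z
    proof -
      have "norm (h z) \<le> norm z ^ m * norm (h z)" using that by (simp add: mult_le_cancel_right1)
      also have "\<dots> = norm (g z)" by (simp add: gh norm_mult norm_power)
      finally show ?thesis using bound[of z] by simp
    qed
    ultimately have "h 0 = 0"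
      by (intro sym_seq_zeros_imp_zero_at_0[OF holh lam_pos lam_incr _ _ \<kappa> sparse])
    with \<open>h 0 \<noteq> 0\<close> show False ..
  qed
qed

section \<open>Non-uniqueness via a Weierstrass product\<close>

lemma sinh_le_mult_exp:
  fixes t :: real
  assumes "0 \<le> t"
  shows "sinh t \<le> t * exp t"
proof -
  have "exp t - exp (- t) = exp t * (1 - exp (- (2 * t)))" by (simp add: algebra_simps flip: exp_add)
  also have "\<dots> \<le> exp t * (2 * t)"
    using exp_ge_add_one_self[of "- (2 * t)"] by (intro mult_left_mono) auto
  finally show ?thesis by (simp add: sinh_field_def mult_ac)
qed

lemma sin_i_times_of_real: "sin (\<i> * complex_of_real t) = \<i> * complex_of_real (sinh t)"
  by (simp add: sin_i_times sinh_field_def exp_minus exp_of_real)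

text \<open>The partial products of sin (pi z) / (pi z) at z = \<i> x increase to sinh (pi x) / (pi x).\<close>
lemma prod_one_plus_sq_div_sq_le_exp:
  fixes x :: real
  assumes "0 \<le> x"
  shows "(\<Prod>k=1..N. 1 + x\<^sup>2 / (real k)\<^sup>2) \<le> exp (pi * x)"
proof (cases "x = 0")
  case False
  with assms have t: "pi * x > 0" by simp
  define P where "P n = (\<Prod>k=1..n. 1 + x\<^sup>2 / (real k)\<^sup>2)" for n
  have "(\<Prod>k=1..n. 1 - (\<i> * complex_of_real x)\<^sup>2 / (of_nat k)\<^sup>2) = complex_of_real (P n)" for n
    by (simp add: P_def power_mult_distrib)
  then have "(\<lambda>n. complex_of_real pi * (\<i> * x) * P n) \<longlonglongrightarrow> sin (complex_of_real pi * (\<i> * x))"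
    using sin_product_formula_complex[of "\<i> * complex_of_real x"] by simp
  moreover have pix: "complex_of_real pi * (\<i> * x) = \<i> * complex_of_real (pi * x)" by simp
  ultimately have "(\<lambda>n. \<i> * complex_of_real (pi * x) * P n) \<longlonglongrightarrow> \<i> * complex_of_real (sinh (pi * x))"
    by (simp only: sin_i_times_of_real)
  from tendsto_Im[OF this] have "(\<lambda>n. pi * x * P n) \<longlonglongrightarrow> sinh (pi * x)" by simp
  moreover have "pi * x * P N \<le> pi * x * P n" if "N \<le> n" for n
    using that t unfolding P_def by (intro mult_left_mono prod_mono2) auto
  ultimately have "pi * x * P N \<le> sinh (pi * x)"
    by (intro LIMSEQ_le_const[OF _ exI[of _ N]]) auto
  also have "\<dots> \<le> pi * x * exp (pi * x)" using t by (intro sinh_le_mult_exp) simp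
  finally have "pi * x * P N \<le> pi * x * exp (pi * x)" .
  then show ?thesis using t unfolding P_def by (meson mult_le_cancel_left_pos)
qed simp

lemma one_plus_sq_div_le_exp:
  fixes t \<mu> \<epsilon> :: real
  assumes "\<mu> > 0" "\<epsilon> > 0" "t \<ge> 0"
  shows "1 + t\<^sup>2 / \<mu> \<le> (1 + 4 / (\<epsilon>\<^sup>2 * \<mu>)) * exp (\<epsilon> * t)"
proof -
  have "\<epsilon> * t / 2 \<le> exp (\<epsilon> * t / 2)" using exp_ge_add_one_self[of "\<epsilon> * t / 2"] by linarith
  then have "(\<epsilon> * t / 2)\<^sup>2 \<le> (exp (\<epsilon> * t / 2))\<^sup>2" using assms by (intro power_mono) auto
  then have "t\<^sup>2 \<le> 4 / \<epsilon>\<^sup>2 * exp (\<epsilon> * t)"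
    using assms by (simp add: field_simps flip: exp_of_nat_mult)
  then have "t\<^sup>2 / \<mu> \<le> 4 / (\<epsilon>\<^sup>2 * \<mu>) * exp (\<epsilon> * t)"
    using assms by (simp add: divide_right_mono[of _ _ \<mu>] field_simps)
  moreover have "1 \<le> exp (\<epsilon> * t)" using assms by simp
  ultimately have "1 + t\<^sup>2 / \<mu> \<le> exp (\<epsilon> * t) + 4 / (\<epsilon>\<^sup>2 * \<mu>) * exp (\<epsilon> * t)" by linarith
  then show ?thesis by (simp add: algebra_simps)
qed

lemma prod_one_plus_sq_div_tail_le_exp:
  fixes a :: "nat \<Rightarrow> real"
  assumes "\<kappa> > 0" "1 \<le> K" and a_ge: "\<And>n. K \<le> n \<Longrightarrow> \<kappa> * real n \<le> a n" and "0 \<le> t"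
  shows "(\<Prod>n\<in>{K..<M}. 1 + t\<^sup>2 / (a n)\<^sup>2) \<le> exp (pi * (t / \<kappa>))"
proof -
  have "(\<Prod>n\<in>{K..<M}. 1 + t\<^sup>2 / (a n)\<^sup>2) \<le> (\<Prod>n\<in>{K..<M}. 1 + (t / \<kappa>)\<^sup>2 / (real n)\<^sup>2)"
  proof (rule prod_mono)
    fix n assume "n \<in> {K..<M}"
    then have pos: "0 < \<kappa> * real n" and le: "\<kappa> * real n \<le> a n" using assms by auto
    then have "(\<kappa> * real n)\<^sup>2 \<le> (a n)\<^sup>2" by (intro power_mono) auto
    moreover have "0 < a n" using pos le by linarith
    then have "0 < (a n)\<^sup>2 * (\<kappa> * real n)\<^sup>2"
      using mult_pos_pos[OF zero_less_power zero_less_power] pos by blast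
    ultimately have "t\<^sup>2 / (a n)\<^sup>2 \<le> t\<^sup>2 / (\<kappa> * real n)\<^sup>2"
      by (intro divide_left_mono) auto
    then show "0 \<le> 1 + t\<^sup>2 / (a n)\<^sup>2 \<and> 1 + t\<^sup>2 / (a n)\<^sup>2 \<le> 1 + (t / \<kappa>)\<^sup>2 / (real n)\<^sup>2"
      by (simp add: field_simps)
  qed
  also have "\<dots> \<le> (\<Prod>n=1..M. 1 + (t / \<kappa>)\<^sup>2 / (real n)\<^sup>2)"
    using \<open>1 \<le> K\<close> by (intro prod_mono2) auto
  also have "\<dots> \<le> exp (pi * (t / \<kappa>))"
    using assms by (intro prod_one_plus_sq_div_sq_le_exp) simp
  finally show ?thesis .
qed

text \<open>Finitely many initial factors cost only exp (\<epsilon> t); the tail is controlled by the sinh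
  product once a n grows linearly.\<close>
lemma prod_one_plus_sq_div_le_exp:
  fixes a :: "nat \<Rightarrow> real"
  assumes a_pos: "\<And>n. a n > 0" and "\<kappa> > 0" "\<epsilon> > 0"
    and a_ge: "\<forall>\<^sub>F n in sequentially. \<kappa> * real n \<le> a n"
  obtains D where "\<And>N t. 0 \<le> t \<Longrightarrow> (\<Prod>n<N. 1 + t\<^sup>2 / (a n)\<^sup>2) \<le> D * exp ((pi / \<kappa> + \<epsilon>) * t)"
proof -
  obtain K where K: "1 \<le> K" "\<And>n. K \<le> n \<Longrightarrow> \<kappa> * real n \<le> a n"
    using a_ge unfolding eventually_sequentially by (metis le_Suc_eq not_less_eq_eq order_trans)
  define \<delta> where "\<delta> = \<epsilon> / real K"
  have "\<delta> > 0" using K(1) \<open>\<epsilon> > 0\<close> by (simp add: \<delta>_def)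
  have a_sq_pos: "\<And>n. 0 < (a n)\<^sup>2" by (rule zero_less_power[OF a_pos])
  define D where "D = (\<Prod>n<K. 1 + 4 / (\<delta>\<^sup>2 * (a n)\<^sup>2))"
  have D_nonneg: "0 \<le> D" unfolding D_def by (intro prod_nonneg) simp
  have "(\<Prod>n<N. 1 + t\<^sup>2 / (a n)\<^sup>2) \<le> D * exp ((pi / \<kappa> + \<epsilon>) * t)" if "0 \<le> t" for N t
  proof -
    define M where "M = max N K"
    have "(\<Prod>n<N. 1 + t\<^sup>2 / (a n)\<^sup>2) \<le> (\<Prod>n<M. 1 + t\<^sup>2 / (a n)\<^sup>2)"
      by (intro prod_mono2) (auto simp: M_def)
    also have "\<dots> = (\<Prod>n<K. 1 + t\<^sup>2 / (a n)\<^sup>2) * (\<Prod>n\<in>{K..<M}. 1 + t\<^sup>2 / (a n)\<^sup>2)"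
      using prod.atLeastLessThan_concat[of 0 K M "\<lambda>n. 1 + t\<^sup>2 / (a n)\<^sup>2"]
      by (simp add: M_def lessThan_atLeast0)
    also have "\<dots> \<le> (D * exp (\<epsilon> * t)) * exp (pi * (t / \<kappa>))"
    proof (intro mult_mono)
      have "(\<Prod>n<K. 1 + t\<^sup>2 / (a n)\<^sup>2) \<le> (\<Prod>n<K. (1 + 4 / (\<delta>\<^sup>2 * (a n)\<^sup>2)) * exp (\<delta> * t))"
        using a_sq_pos \<open>\<delta> > 0\<close> \<open>0 \<le> t\<close>
        by (intro prod_mono conjI one_plus_sq_div_le_exp add_nonneg_nonneg) auto
      also have "\<dots> = D * exp (\<epsilon> * t)"
        using K(1) by (simp add: D_def \<delta>_def prod.distrib flip: exp_of_nat_mult)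
      finally show "(\<Prod>n<K. 1 + t\<^sup>2 / (a n)\<^sup>2) \<le> D * exp (\<epsilon> * t)" .
      show "(\<Prod>n\<in>{K..<M}. 1 + t\<^sup>2 / (a n)\<^sup>2) \<le> exp (pi * (t / \<kappa>))"
        using K \<open>\<kappa> > 0\<close> \<open>0 \<le> t\<close> by (intro prod_one_plus_sq_div_tail_le_exp)
    qed (use D_nonneg in \<open>auto intro!: prod_nonneg\<close>)
    also have "\<dots> = D * exp ((pi / \<kappa> + \<epsilon>) * t)"
      by (simp add: algebra_simps flip: exp_add)
    finally show ?thesis .
  qed
  then show ?thesis using that by blast
qed

lemma summable_divide_of_quadratic_growth:
  fixes x :: "nat \<Rightarrow> real"
  assumes "c > 0" "r \<ge> 0" and x_ge: "\<forall>\<^sub>F n in sequentially. c * (real n)\<^sup>2 \<le> x n"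
  shows "summable (\<lambda>n. r / x n)"
proof (rule summable_comparison_test_ev)
  show "summable (\<lambda>n. r / c * inverse ((real n)\<^sup>2))"
    by (intro summable_mult inverse_power_summable) auto
  show "\<forall>\<^sub>F n in sequentially. norm (r / x n) \<le> r / c * inverse ((real n)\<^sup>2)"
    using x_ge eventually_ge_at_top[of 1]
  proof eventually_elim
    case (elim n)
    have "0 < c * (real n)\<^sup>2" using elim(2) \<open>c > 0\<close> by simp
    with elim(1) have "r / x n \<le> r / (c * (real n)\<^sup>2)"
      using \<open>r \<ge> 0\<close> by (intro divide_left_mono) (auto intro: mult_pos_pos)
    also have "\<dots> = r / c * inverse ((real n)\<^sup>2)" by (simp add: divide_inverse)
    finally show ?case
      using \<open>r \<ge> 0\<close> \<open>0 < c * (real n)\<^sup>2\<close> elim(1) by simp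
  qed
qed

lemma weierstrass_product_sq_of_linear_growth:
  fixes a :: "nat \<Rightarrow> real"
  assumes a_pos: "\<And>n. a n > 0" and "\<kappa> > 0"
    and a_ge: "\<forall>\<^sub>F n in sequentially. \<kappa> * real n \<le> a n"
  shows "weierstrass_product (\<lambda>n. complex_of_real ((a n)\<^sup>2)) (\<lambda>_. 0)"
proof -
  define \<mu> where "\<mu> n = complex_of_real ((a n)\<^sup>2)" for n
  have norm_\<mu>: "norm (\<mu> n) = (a n)\<^sup>2" for n by (simp add: \<mu>_def norm_power)
  have \<mu>_ge: "\<forall>\<^sub>F n in sequentially. \<kappa>\<^sup>2 * (real n)\<^sup>2 \<le> norm (\<mu> n)"
    using a_ge by eventually_elim (use \<open>\<kappa> > 0\<close> in \<open>simp add: norm_\<mu> power_mult_distrib[symmetric] power_mono\<close>)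
  have "weierstrass_product \<mu> (\<lambda>_. 0)"
  proof
    show "\<mu> n \<noteq> 0" for n using a_pos[of n] by (simp add: \<mu>_def)
    have "filterlim (\<lambda>n. \<kappa>\<^sup>2 * real n) at_top sequentially"
      using \<open>\<kappa> > 0\<close>
      by (intro filterlim_tendsto_pos_mult_at_top[OF tendsto_const] filterlim_real_sequentially) simp
    moreover have "\<forall>\<^sub>F n in sequentially. \<kappa>\<^sup>2 * real n \<le> norm (\<mu> n)"
      using \<mu>_ge eventually_ge_at_top[of 1]
    proof eventually_elim
      case (elim n)
      have "\<kappa>\<^sup>2 * real n \<le> \<kappa>\<^sup>2 * (real n)\<^sup>2"
        using elim(2) by (intro mult_left_mono) (auto simp: power2_eq_square)
      with elim(1) show ?case by linarith
    qed
    ultimately show "filterlim \<mu> at_infinity sequentially"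
      unfolding filterlim_at_infinity_conv_norm_at_top by (rule filterlim_at_top_mono)
    show "summable (\<lambda>n. (r / norm (\<mu> n)) ^ Suc 0)" if "r > 0" for r
      using summable_divide_of_quadratic_growth[OF _ _ \<mu>_ge] \<open>\<kappa> > 0\<close> that by simp
  qed
  then show ?thesis by (simp add: \<mu>_def[abs_def])
qed

text \<open>Since the sum of 1 / a n may diverge, the product is taken in w = z^4, where the sum of
  1 / (a n)^2 converges and factors of genus zero suffice.\<close>
lemma entire_product_fourth_power:
  fixes a :: "nat \<Rightarrow> real"
  assumes a_pos: "\<And>n. a n > 0" and "\<kappa> > 0"
    and a_ge: "\<forall>\<^sub>F n in sequentially. \<kappa> * real n \<le> a n"
  obtains G where "G holomorphic_on UNIV" "G 0 \<noteq> 0"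
    "\<And>n z. z ^ 4 = complex_of_real ((a n)\<^sup>2) \<Longrightarrow> G z = 0"
    "\<And>z B. (\<And>N. (\<Prod>n<N. 1 + norm z ^ 4 / (a n)\<^sup>2) \<le> B) \<Longrightarrow> norm (G z) \<le> B"
proof -
  define \<mu> where "\<mu> n = complex_of_real ((a n)\<^sup>2)" for n
  have norm_\<mu>: "norm (\<mu> n) = (a n)\<^sup>2" for n by (simp add: \<mu>_def norm_power)
  have \<mu>_nonzero: "\<mu> n \<noteq> 0" for n using a_pos[of n] by (simp add: \<mu>_def)
  interpret W: weierstrass_product \<mu> "\<lambda>_. 0"
    unfolding \<mu>_def by (rule weierstrass_product_sq_of_linear_growth[OF a_pos \<open>\<kappa> > 0\<close> a_ge])
  define G where "G = (\<lambda>z. W.f (z ^ 4))"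
  have "(W.f \<circ> (\<lambda>z. z ^ 4)) holomorphic_on UNIV"
    by (rule holomorphic_on_compose[OF _ W.holomorphic]) (intro holomorphic_intros)
  then have "G holomorphic_on UNIV" by (simp add: G_def o_def)
  moreover have "G 0 \<noteq> 0"
    using W.zero[of 0] \<mu>_nonzero by (auto simp: G_def)
  moreover have "G z = 0" if "z ^ 4 = complex_of_real ((a n)\<^sup>2)" for n z
  proof -
    have "z ^ 4 \<in> range \<mu>" using that unfolding \<mu>_def by (rule range_eqI)
    then show ?thesis by (simp add: G_def W.zero)
  qed
  moreover have "norm (G z) \<le> B" if B: "\<And>N. (\<Prod>n<N. 1 + norm z ^ 4 / (a n)\<^sup>2) \<le> B" for z B
    unfolding G_def
  proof (rule LIMSEQ_le_const2[OF tendsto_norm[OF has_prod_imp_tendsto'[OF W.has_prod]]])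
    show "\<exists>N. \<forall>n\<ge>N. norm (\<Prod>k<n. weierstrass_factor 0 (z ^ 4 / \<mu> k)) \<le> B"
    proof (intro exI allI impI)
      fix N
      have "norm (\<Prod>k<N. weierstrass_factor 0 (z ^ 4 / \<mu> k)) = (\<Prod>k<N. norm (1 - z ^ 4 / \<mu> k))"
        by (simp add: weierstrass_factor_def prod_norm)
      also have "\<dots> \<le> (\<Prod>k<N. 1 + norm z ^ 4 / (a k)\<^sup>2)"
        by (intro prod_mono conjI norm_ge_zero order_trans[OF norm_triangle_ineq4])
          (simp add: norm_divide norm_power norm_\<mu>)
      finally show "norm (\<Prod>k<N. weierstrass_factor 0 (z ^ 4 / \<mu> k)) \<le> B" using B by (rule order_trans)
    qed
  qed
  ultimately show ?thesis using that by (auto simp: G_def)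
qed

lemma not_uniqueness_set_sym_seq_Ob1:
  fixes lam :: "nat \<Rightarrow> real" and b \<kappa> :: real
  assumes lam_pos: "\<And>k. lam k > 0" and \<kappa>: "\<kappa> > 0" "pi / \<kappa> < b"
    and dense: "\<forall>\<^sub>F k in sequentially. \<kappa> * real k \<le> (lam k)\<^sup>2"
  shows "\<not> uniqueness_set (complex_of_real ` sym_seq_set lam) (Ob1 b)"
proof -
  have "0 < b - pi / \<kappa>" using \<kappa>(2) by simp
  obtain G where holG: "G holomorphic_on UNIV" and "G 0 \<noteq> 0"
    and zeros: "\<And>n z. z ^ 4 = complex_of_real (((lam n)\<^sup>2)\<^sup>2) \<Longrightarrow> G z = 0"
    and bound: "\<And>z B. (\<And>N. (\<Prod>n<N. 1 + norm z ^ 4 / ((lam n)\<^sup>2)\<^sup>2) \<le> B) \<Longrightarrow> norm (G z) \<le> B"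
    using entire_product_fourth_power[of "\<lambda>n. (lam n)\<^sup>2", OF zero_less_power[OF lam_pos] \<kappa>(1) dense]
    by blast
  obtain D where D: "\<And>N t. 0 \<le> t \<Longrightarrow>
      (\<Prod>n<N. 1 + t\<^sup>2 / ((lam n)\<^sup>2)\<^sup>2) \<le> D * exp ((pi / \<kappa> + (b - pi / \<kappa>)) * t)"
    using prod_one_plus_sq_div_le_exp[of "\<lambda>n. (lam n)\<^sup>2", OF zero_less_power[OF lam_pos] \<kappa>(1)
        \<open>0 < b - pi / \<kappa>\<close> dense]
    by blast
  have "1 \<le> D" using D[of 0 0] by simp
  have "norm (G z) \<le> D * exp (b * (norm z)\<^sup>2)" for z
  proof (rule bound)
    fix N
    show "(\<Prod>n<N. 1 + norm z ^ 4 / ((lam n)\<^sup>2)\<^sup>2) \<le> D * exp (b * (norm z)\<^sup>2)"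
      using D[of "(norm z)\<^sup>2" N] by (simp flip: power_mult)
  qed
  then have "G \<in> Ob1 b" using holG \<open>1 \<le> D\<close> by (auto simp: Ob1_def intro!: exI[of _ D])
  moreover have "G x = 0" if x: "x \<in> complex_of_real ` sym_seq_set lam" for x
  proof -
    from x obtain y k where "x = complex_of_real y" "y = lam k \<or> y = - lam k"
      unfolding sym_seq_set_def by blast
    then have "x ^ 4 = complex_of_real (((lam k)\<^sup>2)\<^sup>2)" by auto
    then show ?thesis by (rule zeros)
  qed
  ultimately show ?thesis using \<open>G 0 \<noteq> 0\<close> unfolding uniqueness_set_def by blast
qed

section \<open>Densities expressed by liminf\<close>

lemma liminf_less_imp_frequently_sq_less:
  fixes f :: "nat \<Rightarrow> real"
  assumes "liminf (\<lambda>k. ereal (f k / sqrt (real k))) < ereal u" "0 < u" "\<And>k. 0 \<le> f k"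
  obtains \<kappa> where "0 < \<kappa>" "\<kappa> < u\<^sup>2" "\<exists>\<^sub>F k in sequentially. (f k)\<^sup>2 < \<kappa> * real k"
proof -
  obtain r where r: "liminf (\<lambda>k. ereal (f k / sqrt (real k))) < ereal r" "r < u"
    using ereal_dense2[OF assms(1)] by auto
  define c where "c = max r (u / 2)"
  have "0 < c" "c < u" using r(2) assms(2) by (auto simp: c_def)
  have "liminf (\<lambda>k. ereal (f k / sqrt (real k))) < ereal c"
    using r(1) by (rule order.strict_trans2) (simp add: c_def)
  have "\<exists>\<^sub>F k in sequentially. f k / sqrt (real k) < c"
  proof (rule ccontr)
    assume "\<not> ?thesis"
    then have "\<forall>\<^sub>F k in sequentially. ereal c \<le> ereal (f k / sqrt (real k))"
      by (simp add: not_frequently not_less)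
    then have "ereal c \<le> liminf (\<lambda>k. ereal (f k / sqrt (real k)))" by (rule Liminf_bounded)
    with \<open>liminf (\<lambda>k. ereal (f k / sqrt (real k))) < ereal c\<close> show False by simp
  qed
  moreover have "\<forall>\<^sub>F k in sequentially. f k / sqrt (real k) < c \<longrightarrow> (f k)\<^sup>2 < c\<^sup>2 * real k"
    using eventually_ge_at_top[of 1]
  proof eventually_elim
    case (elim k)
    show ?case
    proof
      assume "f k / sqrt (real k) < c"
      then have "f k < c * sqrt (real k)" using elim by (simp add: field_simps)
      then have "(f k)\<^sup>2 < (c * sqrt (real k))\<^sup>2" using assms(3) by (intro power_strict_mono) auto
      then show "(f k)\<^sup>2 < c\<^sup>2 * real k" by (simp add: power_mult_distrib)
    qed
  qed
  ultimately have "\<exists>\<^sub>F k in sequentially. (f k)\<^sup>2 < c\<^sup>2 * real k" by (rule frequently_mp[rotated])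
  moreover have "c\<^sup>2 < u\<^sup>2" using \<open>0 < c\<close> \<open>c < u\<close> by (intro power_strict_mono) auto
  ultimately show ?thesis using that[of "c\<^sup>2"] \<open>0 < c\<close> by simp
qed

lemma less_liminf_imp_eventually_sq_ge:
  fixes f :: "nat \<Rightarrow> real"
  assumes "ereal u < liminf (\<lambda>k. ereal (f k / sqrt (real k)))" "0 \<le> u"
  obtains \<kappa> where "u\<^sup>2 < \<kappa>" "\<forall>\<^sub>F k in sequentially. \<kappa> * real k \<le> (f k)\<^sup>2"
proof -
  obtain c where c: "u < c" "ereal c < liminf (\<lambda>k. ereal (f k / sqrt (real k)))"
    using ereal_dense2[OF assms(1)] by auto
  have "\<forall>\<^sub>F k in sequentially. c\<^sup>2 * real k \<le> (f k)\<^sup>2"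
    using less_LiminfD[OF c(2)] eventually_ge_at_top[of 1]
  proof eventually_elim
    case (elim k)
    then have "c * sqrt (real k) < f k" by (simp add: field_simps)
    then have "(c * sqrt (real k))\<^sup>2 \<le> (f k)\<^sup>2"
      using c(1) assms(2) by (intro power_mono) auto
    then show ?case by (simp add: power_mult_distrib)
  qed
  moreover have "u\<^sup>2 < c\<^sup>2" using c(1) assms(2) by (intro power_strict_mono) auto
  ultimately show ?thesis using that by blast
qed

lemma uniqueness_set_sym_seq_Ob1_liminf:
  fixes lam :: "nat \<Rightarrow> real" and b :: real
  assumes "b > 0" and lam_pos: "\<And>k. lam k > 0" and lam_incr: "strict_mono lam"
    and small: "liminf (\<lambda>k. ereal (lam k / sqrt (real k))) < ereal (1 / sqrt (b * exp 1))"
  shows "uniqueness_set (complex_of_real ` sym_seq_set lam) (Ob1 b)"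
proof -
  have "0 < 1 / sqrt (b * exp 1)" using \<open>b > 0\<close> by simp
  then obtain \<kappa> where "0 < \<kappa>" "\<kappa> < (1 / sqrt (b * exp 1))\<^sup>2"
    and sparse: "\<exists>\<^sub>F k in sequentially. (lam k)\<^sup>2 < \<kappa> * real k"
    using liminf_less_imp_frequently_sq_less[OF small _ less_imp_le[OF lam_pos]] by blast
  moreover have "(1 / sqrt (b * exp 1))\<^sup>2 = 1 / (b * exp 1)"
    using \<open>b > 0\<close> by (simp add: power_divide)
  ultimately have "b * \<kappa> * exp 1 < 1" using \<open>b > 0\<close> by (simp add: field_simps)
  with \<open>0 < \<kappa>\<close> sparse show ?thesis
    by (intro uniqueness_set_sym_seq_Ob1[OF lam_pos lam_incr])
qed

lemma not_uniqueness_set_sym_seq_Ob1_liminf: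
  fixes lam :: "nat \<Rightarrow> real" and b :: real
  assumes "b > 0" and lam_pos: "\<And>k. lam k > 0"
    and big: "ereal (sqrt (pi / b)) < liminf (\<lambda>k. ereal (lam k / sqrt (real k)))"
  shows "\<not> uniqueness_set (complex_of_real ` sym_seq_set lam) (Ob1 b)"
proof -
  obtain \<kappa> where "(sqrt (pi / b))\<^sup>2 < \<kappa>"
    and dense: "\<forall>\<^sub>F k in sequentially. \<kappa> * real k \<le> (lam k)\<^sup>2"
    using less_liminf_imp_eventually_sq_ge[OF big real_sqrt_ge_zero] \<open>b > 0\<close> by auto
  then have "pi / b < \<kappa>" using \<open>b > 0\<close> by simp
  moreover have "0 < pi / b" using \<open>b > 0\<close> by simp
  ultimately have "0 < \<kappa>" by linarith
  moreover from \<open>pi / b < \<kappa>\<close> \<open>b > 0\<close> \<open>0 < \<kappa>\<close> have "pi / \<kappa> < b"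
    by (simp add: field_simps)
  ultimately show ?thesis by (intro not_uniqueness_set_sym_seq_Ob1[OF lam_pos _ _ dense])
qed

theorem proposition2p5:
  fixes b :: "real ^ 'n" and lam :: "'n \<Rightarrow> nat \<Rightarrow> real"
  assumes b_pos: "\<And>j. b $ j > 0"
    and lam_pos: "\<And>j k. lam j k > 0"
    and lam_incr: "\<And>j. strict_mono (lam j)"
  shows "((\<forall>j. liminf (\<lambda>k. ereal (lam j k / sqrt (real k)))
                < ereal (1 / sqrt (b $ j * exp 1)))
           \<longrightarrow> uniqueness_set (product_lattice lam) (Ob b)) \<and>
         ((\<exists>j. liminf (\<lambda>k. ereal (lam j k / sqrt (real k)))
                > ereal (sqrt (pi / b $ j)))
           \<longrightarrow> \<not> uniqueness_set (product_lattice lam) (Ob b))"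
proof (intro conjI impI)
  assume small: "\<forall>j. liminf (\<lambda>k. ereal (lam j k / sqrt (real k))) < ereal (1 / sqrt (b $ j * exp 1))"
  have "uniqueness_set (complex_of_real ` sym_seq_set (lam j)) (Ob1 (b $ j))" for j
    by (rule uniqueness_set_sym_seq_Ob1_liminf[OF b_pos lam_pos lam_incr small[rule_format]])
  then show "uniqueness_set (product_lattice lam) (Ob b)"
    unfolding product_lattice_def by (rule uniqueness_set_product)
next
  assume "\<exists>j. liminf (\<lambda>k. ereal (lam j k / sqrt (real k))) > ereal (sqrt (pi / b $ j))"
  then obtain j where big: "ereal (sqrt (pi / b $ j)) < liminf (\<lambda>k. ereal (lam j k / sqrt (real k)))"
    by blast
  have "\<not> uniqueness_set (complex_of_real ` sym_seq_set (lam j)) (Ob1 (b $ j))"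
    by (rule not_uniqueness_set_sym_seq_Ob1_liminf[OF b_pos lam_pos big])
  then show "\<not> uniqueness_set (product_lattice lam) (Ob b)"
    unfolding product_lattice_def by (rule not_uniqueness_set_product) (simp add: b_pos less_imp_le)
qed

end
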